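(* Assume the network is regular. Let $j^*\in\mathcal E$. (i) $j^*\leadsto j^*$ holds if and only if there exists a child selection $J:\mathcal M\to\mathcal E$ with $j^*\notin J(\mathcal M)$ such that $J(\mathcal M)$ selects an $S$-basis. (ii) For $j'\in\mathcal E$ with $j'\neq j^*$: $j^*\leadsto j'$ holds if and only if there exists a child selection $J:\mathcal M\to\mathcal E$ with $j^*\notin J(\mathcal M)$ and $j'\in J(\mathcal M)$ such that the swapped set $\{j^*\}\cup J(\mathcal M)\setminus\{j'\}$ selects an $S$-basis.
   Context: A reaction network consists of a finite set of metabolites $\mathcal M=\{1,\dots,M\}$ and a finite set of reactions $\mathcal E=\{1,\dots,E\}$. Each reaction $j$ has an input stoichiometric vector $y^j\in\mathbb R_{\ge0}^M$ and an output stoichiometric vector $\bar y^j\in\mathbb R_{\ge0}^M$. Write $m\vdash j$ iff $y^j_m\neq 0$. The stoichiometric matrix $S$ is the real $M\times E$ matrix whose $j$-th column is $S^j=\bar y^j-y^j$; it is assumed to have full rank $M$. The rate matrix $R=(r_{jm})$ is the $E\times M$ matrix whose entries $r_{jm}$ with $m\vdash j$ are independent indeterminates, and $r_{jm}=0$ whenever $m\not\vdash j$. "Nonzero algebraically" means nonzero as a polynomial/rational function in these indeterminates. For $\mathcal E'\subseteq\mathcal E$, $S^{\mathcal E'}$ denotes the submatrix of columns indexed by $\mathcal E'$; $\mathcal E'$ selects an $S$-basis if $|\mathcal E'|=M$ and $\det S^{\mathcal E'}\neq0$. A child selection is an injective map $J:\mathcal M\to\mathcal E$ with $m\vdash J(m)$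 for all $m$. The network is regular if $\det(SR)\ne0$ algebraically. Let $B=\begin{pmatrix}-\mathrm{id}_{\mathcal E}&R\\ S&0\end{pmatrix}$, a square matrix with rows and columns indexed by the disjoint union $\mathcal E\sqcup\mathcal M$; for a regular network it is invertible over the field of rational functions in the $r_{jm}$. For $\alpha\in\mathcal E\sqcup\mathcal M$ set $z^\alpha=-B^{-1}e_\alpha$, and write $\alpha\leadsto\beta$ ("$\alpha$ influences $\beta$") for $\beta\in\mathcal E\sqcup\mathcal M$ if the component $z^\alpha_\beta$ is nonzero algebraically. (For $j^*\in\mathcal E$ one has $z^{j^*}=(\Phi^{j^*},\delta x^{j^*})$ with $\delta x^{j^*}=-(SR)^{-1}Se_{j^*}$ the linearized steady-state concentration response and $\Phi^{j^*}=e_{j^*}+R\,\delta x^{j^*}$ the flux response to a perturbation of the rate of reaction $j^*$.) *)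

theory Defs
  imports "HOL-Analysis.Analysis"
begin

text \<open>Metabolites are the elements of a finite type 'm, reactions of a finite type 'e.
  Input stoichiometry y j m, output stoichiometry ybar j m.
  The indeterminates r_{jm} are modelled by real assignments r :: 'e => 'm => real;
  "nonzero algebraically" for a rational function in the r_{jm} is rendered as
  "nonzero at some real assignment where it is defined".\<close>

definition stoich :: "('e \<Rightarrow> 'm \<Rightarrow> real) \<Rightarrow> ('e \<Rightarrow> 'm \<Rightarrow> real) \<Rightarrow> real^'e::finite^'m::finite" where
  "stoich y ybar = (\<chi> m j. ybar j m - y j m)"

definition reactant :: "('e \<Rightarrow> 'm \<Rightarrow> real) \<Rightarrow> 'm \<Rightarrow> 'e \<Rightarrow> bool" where
  "reactant y m j \<longleftrightarrow> y j m \<noteq> 0"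

definition rate_matrix :: "('e \<Rightarrow> 'm \<Rightarrow> real) \<Rightarrow> ('e \<Rightarrow> 'm \<Rightarrow> real) \<Rightarrow> real^'m::finite^'e::finite" where
  "rate_matrix y r = (\<chi> j m. if reactant y m j then r j m else 0)"

definition regular :: "('e::finite \<Rightarrow> 'm::finite \<Rightarrow> real) \<Rightarrow> ('e \<Rightarrow> 'm \<Rightarrow> real) \<Rightarrow> bool" where
  "regular y ybar \<longleftrightarrow> (\<exists>r. det (stoich y ybar ** rate_matrix y r) \<noteq> 0)"

definition Bmat :: "('e::finite \<Rightarrow> 'm::finite \<Rightarrow> real) \<Rightarrow> ('e \<Rightarrow> 'm \<Rightarrow> real) \<Rightarrow> ('e \<Rightarrow> 'm \<Rightarrow> real)
    \<Rightarrow> real^('e + 'm)^('e + 'm)" where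
  "Bmat y ybar r = (\<chi> a b. case (a, b) of
      (Inl j, Inl j') \<Rightarrow> (if j = j' then -1 else 0)
    | (Inl j, Inr m) \<Rightarrow> rate_matrix y r $ j $ m
    | (Inr m, Inl j) \<Rightarrow> stoich y ybar $ m $ j
    | (Inr m, Inr m') \<Rightarrow> 0)"

definition zvec :: "('e::finite \<Rightarrow> 'm::finite \<Rightarrow> real) \<Rightarrow> ('e \<Rightarrow> 'm \<Rightarrow> real) \<Rightarrow> ('e \<Rightarrow> 'm \<Rightarrow> real)
    \<Rightarrow> 'e + 'm \<Rightarrow> real^('e + 'm)" where
  "zvec y ybar r \<alpha> = - (matrix_inv (Bmat y ybar r) *v axis \<alpha> 1)"

text \<open>alpha influences beta: the component z^alpha_beta is a nonzero rational function,
  i.e. nonzero at some assignment where B is invertible.\<close>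
definition influences :: "('e::finite \<Rightarrow> 'm::finite \<Rightarrow> real) \<Rightarrow> ('e \<Rightarrow> 'm \<Rightarrow> real)
    \<Rightarrow> 'e + 'm \<Rightarrow> 'e + 'm \<Rightarrow> bool" where
  "influences y ybar \<alpha> \<beta> \<longleftrightarrow>
     (\<exists>r. invertible (Bmat y ybar r) \<and> zvec y ybar r \<alpha> $ \<beta> \<noteq> 0)"

definition child_selection :: "('e \<Rightarrow> 'm \<Rightarrow> real) \<Rightarrow> ('m \<Rightarrow> 'e) \<Rightarrow> bool" where
  "child_selection y J \<longleftrightarrow> inj J \<and> (\<forall>m. reactant y m (J m))"

text \<open>E' selects an S-basis: |E'| = M and det S^{E'} \<noteq> 0 (columns of E' listed via a bijection
  from the metabolites; the choice of order only affects the sign).\<close>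
definition selects_basis :: "('e::finite \<Rightarrow> 'm::finite \<Rightarrow> real) \<Rightarrow> ('e \<Rightarrow> 'm \<Rightarrow> real) \<Rightarrow> 'e set \<Rightarrow> bool" where
  "selects_basis y ybar E' \<longleftrightarrow> card E' = CARD('m) \<and>
     (\<exists>f :: 'm \<Rightarrow> 'e. bij_betw f UNIV E' \<and> det (\<chi> i k. stoich y ybar $ i $ f k) \<noteq> 0)"

end

(*
  Fix rates r with det (S R) ~= 0 and let S' be S with column j' replaced by S^j' - S^jstar.
  Then S' R = S R - S^jstar R_j', and the concentration response dx solves S R dx = - S^jstar,
  so the matrix determinant lemma gives det (S' R) = det (S R) ([j' ~= jstar] + Phi_j') for the
  flux response Phi. Expanding det (A R) as a sum over all maps J : M -> E of the monomials
  prod_m r_(J m, m) times det A^J, the polynomial det (S R) Phi_j' has the coefficient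
  det S'^J - [j' ~= jstar] det S^J at J. The monomial is present only if m |- J m for all m, and
  the coefficient vanishes unless J is injective, so only child selections contribute; by
  multilinearity in the columns the coefficient is det S^J (if j' = jstar, jstar not in J(M)),
  or minus the determinant of S on the swapped selection (if j' = J m ~= jstar, jstar not in
  J(M)), and 0 otherwise. Since det (S R) is a nonzero polynomial by regularity, and two nonzero
  polynomials have a common non-root, Phi_j' is a nonzero rational function iff one of these
  coefficients is nonzero.
*)
theory Submission
  imports Defs "HOL-Computational_Algebra.Polynomial"
begin

section \<open>Determinant expansions\<close>

definition column_select :: "'a^'e^'m \<Rightarrow> ('k \<Rightarrow> 'e) \<Rightarrow> 'a^'k^'m" where
  "column_select A f = (\<chi> i k. A $ i $ f k)"

definition outer_prod :: "'a::times^'m \<Rightarrow> 'a^'n \<Rightarrow> 'a^'n^'m" where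
  "outer_prod u v = (\<chi> i j. u $ i * v $ j)"

lemma det_linear_rows_sum_UNIV:
  fixes a :: "'n::finite \<Rightarrow> 'j::finite \<Rightarrow> 'a::comm_ring_1^'n"
  shows "det (\<chi> i. \<Sum>j\<in>UNIV. a i j) = (\<Sum>f\<in>UNIV. det (\<chi> i. a i (f i)))"
proof -
  let ?P = "{p. p permutes (UNIV :: 'n set)}"
  have "det (\<chi> i. \<Sum>j\<in>UNIV. a i j)
      = (\<Sum>p\<in>?P. of_int (sign p) * (\<Prod>i\<in>UNIV. \<Sum>j\<in>UNIV. a i j $ p i))"
    by (simp add: det_def sum_component)
  also have "\<dots> = (\<Sum>p\<in>?P. of_int (sign p) * (\<Sum>f\<in>UNIV. \<Prod>i\<in>UNIV. a i (f i) $ p i))"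
    by (subst prod_sum_PiE) (simp_all add: PiE_UNIV_domain)
  also have "\<dots> = (\<Sum>f\<in>UNIV. det (\<chi> i. a i (f i)))"
    by (simp add: det_def sum_distrib_left sum.swap[of _ ?P])
  finally show ?thesis .
qed

lemma det_column_select_not_inj:
  fixes A :: "'a::comm_ring_1^'e^'m::finite"
  assumes "\<not> inj f"
  shows "det (column_select A f) = 0"
proof -
  obtain k1 k2 where "k1 \<noteq> k2" "f k1 = f k2"
    using assms unfolding inj_def by blast
  then show ?thesis
    by (intro det_identical_columns[of k1 k2]) (simp_all add: column_def column_select_def)
qed

lemma det_matrix_mult_expansion:
  fixes A :: "'a::comm_ring_1^'e::finite^'m::finite" and B :: "'a^'m^'e"
  shows "det (A ** B) = (\<Sum>f\<in>UNIV. (\<Prod>m\<in>UNIV. B $ f m $ m) * det (column_select A f))"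
proof -
  have "transpose (A ** B) = (\<chi> m. \<Sum>j\<in>UNIV. B $ j $ m *s column j A)"
    by (simp add: vec_eq_iff transpose_def matrix_matrix_mult_def sum_component column_def
        mult.commute)
  then have "det (A ** B) = det (\<chi> m. \<Sum>j\<in>UNIV. B $ j $ m *s column j A)"
    by (metis det_transpose)
  also have "\<dots> = (\<Sum>f\<in>UNIV. det (\<chi> m. B $ f m $ m *s column (f m) A))"
    by (rule det_linear_rows_sum_UNIV)
  also have "\<dots> = (\<Sum>f\<in>UNIV. (\<Prod>m\<in>UNIV. B $ f m $ m) * det (column_select A f))"
  proof (rule sum.cong [OF refl])
    fix f :: "'m \<Rightarrow> 'e"
    have "(\<chi> m. column (f m) A) = transpose (column_select A f)"
      by (simp add: vec_eq_iff transpose_def column_def column_select_def)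
    then show "det (\<chi> m. B $ f m $ m *s column (f m) A)
        = (\<Prod>m\<in>UNIV. B $ f m $ m) * det (column_select A f)"
      by (simp add: det_rows_mul)
  qed
  finally show ?thesis .
qed

lemma sum_predicates_at_most_one:
  fixes F :: "('n::finite \<Rightarrow> bool) \<Rightarrow> 'a::comm_monoid_add"
  assumes "\<And>g k l. g k \<Longrightarrow> g l \<Longrightarrow> k \<noteq> l \<Longrightarrow> F g = 0"
  shows "(\<Sum>g\<in>UNIV. F g) = F (\<lambda>_. False) + (\<Sum>k\<in>UNIV. F (\<lambda>i. i = k))"
proof -
  let ?single = "\<lambda>(k::'n) i. i = k"
  have "(\<Sum>g\<in>UNIV. F g) = (\<Sum>g\<in>insert (\<lambda>_. False) (range ?single). F g)"
  proof (rule sum.mono_neutral_right)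
    show "\<forall>g\<in>UNIV - insert (\<lambda>_. False) (range ?single). F g = 0"
    proof
      fix g
      assume g: "g \<in> UNIV - insert (\<lambda>_. False) (range ?single)"
      then obtain k where "g k"
        by (auto simp: fun_eq_iff)
      moreover from g have "g \<noteq> ?single k"
        by blast
      ultimately obtain l where "g l" and "l \<noteq> k"
        by (auto simp: fun_eq_iff)
      with \<open>g k\<close> show "F g = 0"
        using assms by blast
    qed
  qed auto
  also have "\<dots> = F (\<lambda>_. False) + (\<Sum>k\<in>UNIV. F (?single k))"
  proof -
    have "inj ?single" and "(\<lambda>_. False) \<notin> range ?single"
      by (auto simp: inj_def fun_eq_iff)
    then show ?thesis
      by (simp add: sum.reindex)
  qed
  finally show ?thesis .
qed

lemma det_mat1_row_update:
  fixes b :: "'a::field^'n::finite"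
  shows "det (\<chi> i. if i = k then b else axis i 1) = b $ k"
proof -
  have "(\<chi> i. if i = k then b else axis i 1)
      = transpose (\<chi> i j. if j = k then b $ i else (mat 1 :: 'a^'n^'n) $ i $ j)"
    by (simp add: vec_eq_iff transpose_def mat_def axis_def)
  then show ?thesis
    using cramer_lemma[of k "mat 1" b, unfolded matrix_vector_mul_lid] by simp
qed

lemma det_mat1_add_outer_prod:
  fixes a b :: "'a::field^'n::finite"
  shows "det (mat 1 + outer_prod a b) = 1 + (\<Sum>i\<in>UNIV. a $ i * b $ i)"
proof -
  define E where "E g = det (\<chi> i. if g i then b else axis i (1::'a))" for g :: "'n \<Rightarrow> bool"
  \<comment> \<open>split every row \<open>axis i 1 + a\<^sub>i b\<close>; terms taking \<open>b\<close> in two rows vanish\<close>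
  have "mat 1 + outer_prod a b = (\<chi> i. \<Sum>t\<in>UNIV. if t then a $ i *s b else axis i 1)"
    by (simp add: vec_eq_iff mat_def axis_def outer_prod_def UNIV_bool)
  then have "det (mat 1 + outer_prod a b)
      = (\<Sum>g\<in>UNIV. det (\<chi> i. if g i then a $ i *s b else axis i 1))"
    by (simp add: det_linear_rows_sum_UNIV)
  also have "\<dots> = (\<Sum>g\<in>UNIV. (\<Prod>i\<in>UNIV. if g i then a $ i else 1) * E g)"
  proof (rule sum.cong [OF refl])
    fix g :: "'n \<Rightarrow> bool"
    have "(\<chi> i. if g i then a $ i *s b else axis i 1)
        = (\<chi> i. (if g i then a $ i else 1) *s (if g i then b else axis i 1))"
      by (simp add: vec_eq_iff)
    then show "det (\<chi> i. if g i then a $ i *s b else axis i 1)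
        = (\<Prod>i\<in>UNIV. if g i then a $ i else 1) * E g"
      by (simp add: E_def det_rows_mul)
  qed
  also have "\<dots> = E (\<lambda>_. False) + (\<Sum>k\<in>UNIV. a $ k * E (\<lambda>i. i = k))"
  proof (subst sum_predicates_at_most_one)
    show "(\<Prod>i\<in>UNIV. if g i then a $ i else 1) * E g = 0" if "g k" "g l" "k \<noteq> l" for g k l
      unfolding E_def using that by (simp add: det_identical_rows[of k l] row_def)
  qed (simp add: prod.delta)
  also have "\<dots> = 1 + (\<Sum>k\<in>UNIV. a $ k * b $ k)"
  proof -
    have "(\<chi> i. axis i (1::'a)) = mat 1"
      by (simp add: vec_eq_iff mat_def axis_def)
    then have "E (\<lambda>_. False) = 1"
      unfolding E_def if_False by (metis det_I)
    then show ?thesis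
      by (simp add: E_def det_mat1_row_update)
  qed
  finally show ?thesis .
qed

lemma matrix_mult_outer_prod:
  fixes M :: "'a::comm_semiring_1^'n::finite^'m"
  shows "M ** outer_prod x v = outer_prod (M *v x) v"
  by (simp add: vec_eq_iff outer_prod_def matrix_matrix_mult_def matrix_vector_mult_def
      sum_distrib_right mult.assoc)

lemma outer_prod_axis_mult:
  fixes B :: "'a::comm_semiring_1^'k^'n::finite"
  shows "outer_prod u (axis j 1) ** B = outer_prod u (row j B)"
proof -
  have "(\<Sum>k\<in>UNIV. u $ i * axis j 1 $ k * B $ k $ l) = u $ i * B $ j $ l" for i l
    by (simp add: axis_def if_distrib[of "\<lambda>t. u $ i * t"] if_distrib[of "\<lambda>t. t * B $ _ $ l"]
        cong: if_cong)
  then show ?thesis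
    by (simp add: vec_eq_iff outer_prod_def matrix_matrix_mult_def row_def)
qed

text \<open>The matrix determinant lemma, with \<open>M\<^sup>-\<^sup>1 u\<close> replaced by \<open>- x\<close> so that \<open>M\<close> need not be
  invertible.\<close>
lemma det_diff_outer_prod:
  fixes M :: "'a::field^'n::finite^'n"
  assumes "M *v x = - u"
  shows "det (M - outer_prod u v) = det M * (1 + (\<Sum>i\<in>UNIV. x $ i * v $ i))"
proof -
  have "M ** outer_prod x v = - outer_prod u v"
    unfolding matrix_mult_outer_prod assms by (simp add: outer_prod_def vec_eq_iff)
  then have "M - outer_prod u v = M ** (mat 1 + outer_prod x v)"
    by (simp add: matrix_add_ldistrib)
  then show ?thesis
    by (simp add: det_mul det_mat1_add_outer_prod)
qed

lemma matrix_mult_matrix_inv: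
  assumes "invertible A"
  shows "A ** matrix_inv A = mat 1"
  using assms unfolding invertible_def matrix_inv_def by (rule someI2_ex) blast

lemma invertible_iff_ker:
  fixes A :: "'a::field^'n::finite^'n"
  shows "invertible A \<longleftrightarrow> (\<forall>x. A *v x = 0 \<longrightarrow> x = 0)"
  by (simp add: invertible_left_inverse matrix_left_invertible_ker)

section \<open>Polynomials in the rates\<close>

definition rate_polynomial ::
    "('e::finite \<Rightarrow> 'm::finite \<Rightarrow> real) \<Rightarrow> (('m \<Rightarrow> 'e) \<Rightarrow> real) \<Rightarrow> ('e \<Rightarrow> 'm \<Rightarrow> real) \<Rightarrow> real"
  where "rate_polynomial y c r = (\<Sum>J\<in>UNIV. (\<Prod>m\<in>UNIV. rate_matrix y r $ J m $ m) * c J)"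

lemma det_mult_rate_matrix:
  "det (A ** rate_matrix y r) = rate_polynomial y (\<lambda>J. det (column_select A J)) r"
  by (simp add: rate_polynomial_def det_matrix_mult_expansion)

lemma rate_polynomial_diff_scaled:
  "rate_polynomial y (\<lambda>J. c J - a * d J) r = rate_polynomial y c r - a * rate_polynomial y d r"
  by (simp add: rate_polynomial_def right_diff_distrib sum_subtractf sum_distrib_left
      mult.left_commute)

lemma rate_polynomial_at_selection:
  assumes "\<forall>m. reactant y m (J m)"
  shows "rate_polynomial y c (\<lambda>j m. if j = J m then 1 else 0) = c J"
proof -
  have "(\<Prod>m\<in>UNIV. rate_matrix y (\<lambda>j m. if j = J m then 1 else 0) $ f m $ m) * c f
      = (if f = J then c J else 0)" for f
  proof (cases "f = J")
    case True
    then show ?thesis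
      using assms by (simp add: rate_matrix_def)
  next
    case False
    then obtain m where "f m \<noteq> J m"
      by auto
    then have "rate_matrix y (\<lambda>j m. if j = J m then 1 else 0) $ f m $ m = 0"
      by (simp add: rate_matrix_def)
    then have "(\<Prod>m\<in>UNIV. rate_matrix y (\<lambda>j m. if j = J m then 1 else 0) $ f m $ m) = 0"
      by (intro prod_zero) auto
    with False show ?thesis
      by simp
  qed
  then show ?thesis
    by (simp add: rate_polynomial_def)
qed

lemma rate_polynomial_nonzero_coeff:
  assumes "rate_polynomial y c r \<noteq> 0"
  obtains J where "\<forall>m. reactant y m (J m)" and "c J \<noteq> 0"
proof -
  obtain J where J: "(\<Prod>m\<in>UNIV. rate_matrix y r $ J m $ m) * c J \<noteq> 0"
    using assms unfolding rate_polynomial_def by (meson sum.neutral)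
  then have "reactant y m (J m)" for m
    by (auto simp: rate_matrix_def split: if_splits)
  with J that show thesis
    by auto
qed

lemma rate_polynomial_along_line:
  obtains P where "\<And>t. rate_polynomial y c (\<lambda>j m. p j m + t * (q j m - p j m)) = poly P t"
proof
  define Q where "Q j m = (if reactant y m j then [:p j m, q j m - p j m:] else 0)" for j m
  have entry: "rate_matrix y (\<lambda>j m. p j m + t * (q j m - p j m)) $ j $ m = poly (Q j m) t"
    for t j m
    by (simp add: rate_matrix_def Q_def algebra_simps)
  show "rate_polynomial y c (\<lambda>j m. p j m + t * (q j m - p j m))
      = poly (\<Sum>J\<in>UNIV. smult (c J) (\<Prod>m\<in>UNIV. Q (J m) m)) t" for t
    by (simp add: rate_polynomial_def entry poly_sum poly_prod mult.commute)
qed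

text \<open>On the line through \<open>p\<close> and \<open>q\<close> both restrict to nonzero univariate polynomials, which
  have a common non-root.\<close>
lemma rate_polynomial_common_nonzero:
  assumes "rate_polynomial y a p \<noteq> 0" and "rate_polynomial y c q \<noteq> 0"
  obtains r where "rate_polynomial y a r \<noteq> 0" and "rate_polynomial y c r \<noteq> 0"
proof -
  define line where "line t = (\<lambda>j m. p j m + t * (q j m - p j m))" for t :: real
  obtain Pa where Pa: "\<And>t. rate_polynomial y a (line t) = poly Pa t"
    using rate_polynomial_along_line[of y a p q] unfolding line_def by blast
  obtain Pc where Pc: "\<And>t. rate_polynomial y c (line t) = poly Pc t"
    using rate_polynomial_along_line[of y c p q] unfolding line_def by blast
  have "line 0 = p" "line 1 = q"
    by (auto simp: line_def)
  then have "poly Pa 0 \<noteq> 0" "poly Pc 1 \<noteq> 0"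
    using assms Pa[of 0] Pc[of 1] by auto
  then have "Pa \<noteq> 0" "Pc \<noteq> 0"
    by auto
  then have "finite ({t. poly Pa t = 0} \<union> {t. poly Pc t = 0})"
    by (simp add: poly_roots_finite)
  then obtain t where "t \<notin> {t. poly Pa t = 0} \<union> {t. poly Pc t = 0}"
    using ex_new_if_finite[OF infinite_UNIV_char_0] by blast
  with Pa Pc that[of "line t"] show thesis
    by auto
qed

section \<open>The block matrix \<open>B\<close> and the responses\<close>

definition vec_Inl :: "'a^('e::finite + 'm::finite) \<Rightarrow> 'a^'e" where
  "vec_Inl w = (\<chi> j. w $ Inl j)"

definition vec_Inr :: "'a^('e::finite + 'm::finite) \<Rightarrow> 'a^'m" where
  "vec_Inr w = (\<chi> m. w $ Inr m)"

definition vec_Plus :: "'a^'e::finite \<Rightarrow> 'a^'m::finite \<Rightarrow> 'a^('e + 'm)" where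
  "vec_Plus u v = (\<chi> b. case b of Inl j \<Rightarrow> u $ j | Inr m \<Rightarrow> v $ m)"

lemma vec_Inl_Plus [simp]: "vec_Inl (vec_Plus u v) = u"
  and vec_Inr_Plus [simp]: "vec_Inr (vec_Plus u v) = v"
  by (simp_all add: vec_eq_iff vec_Inl_def vec_Inr_def vec_Plus_def)

lemma vec_Inl_Inr_eq_iff: "w = w' \<longleftrightarrow> vec_Inl w = vec_Inl w' \<and> vec_Inr w = vec_Inr w'"
  by (metis (mono_tags, lifting) vec_eq_iff sum.exhaust vec_Inl_def vec_Inr_def vec_lambda_beta)

lemma vec_Inl_Inr_zero [simp]: "vec_Inl 0 = 0" "vec_Inr 0 = 0"
  by (simp_all add: vec_eq_iff vec_Inl_def vec_Inr_def)

lemma vec_Inl_Inr_uminus [simp]: "vec_Inl (- w) = - vec_Inl w" "vec_Inr (- w) = - vec_Inr w"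
  by (simp_all add: vec_eq_iff vec_Inl_def vec_Inr_def)

lemma vec_Inl_Bmat_mult:
  "vec_Inl (Bmat y ybar r *v w) = rate_matrix y r *v vec_Inr w - vec_Inl w"
proof -
  have "(\<Sum>j'\<in>UNIV. Bmat y ybar r $ Inl j $ Inl j' * w $ Inl j') = - w $ Inl j" for j
    by (simp add: Bmat_def if_distrib[of "\<lambda>t. t * _"] cong: if_cong)
  then show ?thesis
    by (simp add: vec_eq_iff vec_Inl_def vec_Inr_def matrix_vector_mult_def Bmat_def sum.Plus
        flip: UNIV_Plus_UNIV)
qed

lemma vec_Inr_Bmat_mult: "vec_Inr (Bmat y ybar r *v w) = stoich y ybar *v vec_Inl w"
  by (simp add: vec_eq_iff vec_Inl_def vec_Inr_def matrix_vector_mult_def Bmat_def sum.Plus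
      flip: UNIV_Plus_UNIV)

lemma Bmat_mult_eq_iff:
  "Bmat y ybar r *v w = v \<longleftrightarrow>
     rate_matrix y r *v vec_Inr w - vec_Inl w = vec_Inl v \<and> stoich y ybar *v vec_Inl w = vec_Inr v"
  by (simp add: vec_Inl_Inr_eq_iff[of _ v] vec_Inl_Bmat_mult vec_Inr_Bmat_mult)

lemma invertible_Bmat_iff:
  "invertible (Bmat y ybar r) \<longleftrightarrow> det (stoich y ybar ** rate_matrix y r) \<noteq> 0"
proof -
  let ?S = "stoich y ybar" and ?R = "rate_matrix y r"
  have "(\<forall>w. Bmat y ybar r *v w = 0 \<longrightarrow> w = 0) \<longleftrightarrow> (\<forall>x. (?S ** ?R) *v x = 0 \<longrightarrow> x = 0)"
  proof
    assume ker_B: "\<forall>w. Bmat y ybar r *v w = 0 \<longrightarrow> w = 0"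
    show "\<forall>x. (?S ** ?R) *v x = 0 \<longrightarrow> x = 0"
    proof (intro allI impI)
      fix x
      assume "(?S ** ?R) *v x = 0"
      then have "Bmat y ybar r *v vec_Plus (?R *v x) x = 0"
        by (simp add: Bmat_mult_eq_iff matrix_vector_mul_assoc)
      then show "x = 0"
        using ker_B by (metis vec_Inr_Plus vec_Inl_Inr_zero(2))
    qed
  next
    assume ker_SR: "\<forall>x. (?S ** ?R) *v x = 0 \<longrightarrow> x = 0"
    show "\<forall>w. Bmat y ybar r *v w = 0 \<longrightarrow> w = 0"
    proof (intro allI impI)
      fix w
      assume "Bmat y ybar r *v w = 0"
      then have flux: "vec_Inl w = ?R *v vec_Inr w" and "?S *v vec_Inl w = 0"
        by (simp_all add: Bmat_mult_eq_iff)
      then have "(?S ** ?R) *v vec_Inr w = 0"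
        by (metis matrix_vector_mul_assoc)
      with ker_SR have "vec_Inr w = 0"
        by blast
      with flux show "w = 0"
        by (simp add: vec_Inl_Inr_eq_iff[of w])
    qed
  qed
  then show ?thesis
    by (simp add: invertible_iff_ker flip: invertible_det_nz)
qed

lemma Bmat_mult_zvec:
  assumes "invertible (Bmat y ybar r)"
  shows "Bmat y ybar r *v zvec y ybar r \<alpha> = - axis \<alpha> 1"
proof -
  have "Bmat y ybar r *v (- v) = - (Bmat y ybar r *v v)" for v
    by (simp add: vec_eq_iff matrix_vector_mult_def sum_negf)
  then show ?thesis
    by (simp add: zvec_def matrix_vector_mul_assoc matrix_mult_matrix_inv[OF assms])
qed

lemma zvec_reaction_response:
  fixes y ybar r :: "'e::finite \<Rightarrow> 'm::finite \<Rightarrow> real" and js :: 'e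
  assumes "invertible (Bmat y ybar r)"
  defines "z \<equiv> zvec y ybar r (Inl js)"
  shows "(stoich y ybar ** rate_matrix y r) *v vec_Inr z = - column js (stoich y ybar)"
    and "vec_Inl z = axis js 1 + rate_matrix y r *v vec_Inr z"
proof -
  have "vec_Inl (axis (Inl js) 1 :: real^('e + 'm)) = axis js 1"
    and "vec_Inr (axis (Inl js) 1 :: real^('e + 'm)) = 0"
    by (simp_all add: vec_eq_iff vec_Inl_def vec_Inr_def axis_def)
  then have "rate_matrix y r *v vec_Inr z - vec_Inl z = - axis js 1"
    and flux_balance: "stoich y ybar *v vec_Inl z = 0"
    using Bmat_mult_zvec[OF assms(1), of "Inl js"] unfolding z_def Bmat_mult_eq_iff by simp_all
  then show flux: "vec_Inl z = axis js 1 + rate_matrix y r *v vec_Inr z"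
    by (simp add: algebra_simps)
  have "stoich y ybar *v axis js 1 = column js (stoich y ybar)"
    by (rule matrix_vector_mult_basis)
  with flux_balance show "(stoich y ybar ** rate_matrix y r) *v vec_Inr z = - column js (stoich y ybar)"
    unfolding flux by (simp add: matrix_vector_right_distrib matrix_vector_mul_assoc
        eq_neg_iff_add_eq_0 add.commute)
qed

section \<open>Coefficients of the flux response\<close>

text \<open>\<open>S\<close> with column \<open>j'\<close> replaced by \<open>S\<^sup>j\<^sup>' - S\<^sup>j\<^sup>s\<close> (zero if \<open>j' = js\<close>).\<close>
definition stoich_shift ::
    "('e::finite \<Rightarrow> 'm::finite \<Rightarrow> real) \<Rightarrow> ('e \<Rightarrow> 'm \<Rightarrow> real) \<Rightarrow> 'e \<Rightarrow> 'e \<Rightarrow> real^'e^'m"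
  where "stoich_shift y ybar js j' = stoich y ybar - outer_prod (column js (stoich y ybar)) (axis j' 1)"

lemma det_shifted_stoich_rate_matrix:
  assumes "invertible (Bmat y ybar r)"
  shows "det (stoich_shift y ybar js j' ** rate_matrix y r)
       = det (stoich y ybar ** rate_matrix y r)
         * ((if j' = js then 0 else 1) + zvec y ybar r (Inl js) $ Inl j')"
proof -
  let ?S = "stoich y ybar" and ?R = "rate_matrix y r" and ?z = "zvec y ybar r (Inl js)"
  have "(?S - P) ** ?R = ?S ** ?R - P ** ?R" for P
    by (simp add: vec_eq_iff matrix_matrix_mult_def left_diff_distrib sum_subtractf)
  then have "det (stoich_shift y ybar js j' ** ?R)
      = det (?S ** ?R - outer_prod (column js ?S) (row j' ?R))"
    by (simp add: stoich_shift_def outer_prod_axis_mult)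
  also have "\<dots> = det (?S ** ?R) * (1 + (\<Sum>i\<in>UNIV. vec_Inr ?z $ i * row j' ?R $ i))"
    by (rule det_diff_outer_prod[OF zvec_reaction_response(1)[OF assms]])
  also have "(\<Sum>i\<in>UNIV. vec_Inr ?z $ i * row j' ?R $ i) = (?R *v vec_Inr ?z) $ j'"
    by (simp add: matrix_vector_mult_def row_def mult.commute)
  also have "\<dots> = ?z $ Inl j' - (if j' = js then 1 else 0)"
    using arg_cong[OF zvec_reaction_response(2)[OF assms], of "\<lambda>v. v $ j'"]
    by (simp add: vec_Inl_def axis_def)
  finally show ?thesis
    by simp
qed

definition influence_coeff ::
    "('e::finite \<Rightarrow> 'm::finite \<Rightarrow> real) \<Rightarrow> ('e \<Rightarrow> 'm \<Rightarrow> real) \<Rightarrow> 'e \<Rightarrow> 'e \<Rightarrow> ('m \<Rightarrow> 'e) \<Rightarrow> real"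
  where "influence_coeff y ybar js j' J = det (column_select (stoich_shift y ybar js j') J)
    - (if j' = js then 0 else 1) * det (column_select (stoich y ybar) J)"

lemma rate_polynomial_influence_coeff:
  assumes "invertible (Bmat y ybar r)"
  shows "rate_polynomial y (influence_coeff y ybar js j') r
       = det (stoich y ybar ** rate_matrix y r) * zvec y ybar r (Inl js) $ Inl j'"
proof -
  have "rate_polynomial y (influence_coeff y ybar js j') r
      = det (stoich_shift y ybar js j' ** rate_matrix y r)
        - (if j' = js then 0 else 1) * det (stoich y ybar ** rate_matrix y r)"
    unfolding influence_coeff_def det_mult_rate_matrix by (rule rate_polynomial_diff_scaled)
  then show ?thesis
    by (simp add: det_shifted_stoich_rate_matrix[OF assms] algebra_simps)
qed

lemma influences_reaction_iff:
  assumes reg: "regular y ybar"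
  shows "influences y ybar (Inl js) (Inl j')
     \<longleftrightarrow> (\<exists>J. child_selection y J \<and> influence_coeff y ybar js j' J \<noteq> 0)"
proof
  assume "influences y ybar (Inl js) (Inl j')"
  then obtain r where inv: "invertible (Bmat y ybar r)"
    and "zvec y ybar r (Inl js) $ Inl j' \<noteq> 0"
    unfolding influences_def by blast
  moreover have "det (stoich y ybar ** rate_matrix y r) \<noteq> 0"
    using inv by (simp add: invertible_Bmat_iff)
  ultimately have "rate_polynomial y (influence_coeff y ybar js j') r \<noteq> 0"
    by (simp add: rate_polynomial_influence_coeff)
  then obtain J where "\<forall>m. reactant y m (J m)" and coeff: "influence_coeff y ybar js j' J \<noteq> 0"
    by (rule rate_polynomial_nonzero_coeff)
  moreover have "inj J"
  proof (rule ccontr)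
    assume "\<not> inj J"
    then have "influence_coeff y ybar js j' J = 0"
      by (simp add: influence_coeff_def det_column_select_not_inj)
    with coeff show False ..
  qed
  ultimately show "\<exists>J. child_selection y J \<and> influence_coeff y ybar js j' J \<noteq> 0"
    unfolding child_selection_def by blast
next
  assume "\<exists>J. child_selection y J \<and> influence_coeff y ybar js j' J \<noteq> 0"
  then obtain J where "\<forall>m. reactant y m (J m)" and "influence_coeff y ybar js j' J \<noteq> 0"
    unfolding child_selection_def by blast
  then have "rate_polynomial y (influence_coeff y ybar js j') (\<lambda>j m. if j = J m then 1 else 0) \<noteq> 0"
    by (simp add: rate_polynomial_at_selection)
  moreover obtain q where "det (stoich y ybar ** rate_matrix y q) \<noteq> 0"
    using reg unfolding regular_def by blast
  ultimately obtain r where "rate_polynomial y (influence_coeff y ybar js j') r \<noteq> 0"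
    and "rate_polynomial y (\<lambda>J. det (column_select (stoich y ybar) J)) r \<noteq> 0"
    unfolding det_mult_rate_matrix by (rule rate_polynomial_common_nonzero)
  moreover from this(2) have "invertible (Bmat y ybar r)"
    by (simp add: invertible_Bmat_iff det_mult_rate_matrix)
  ultimately show "influences y ybar (Inl js) (Inl j')"
    unfolding influences_def by (auto simp: rate_polynomial_influence_coeff)
qed

lemma det_column_select_shift_self:
  fixes S :: "'a::field^'e^'m::finite"
  shows "det (column_select (S - outer_prod (column j S) (axis j 1)) J)
       = (if j \<in> range J then 0 else det (column_select S J))"
proof (cases "j \<in> range J")
  case True
  then obtain k where "J k = j"
    by auto
  then have "column k (column_select (S - outer_prod (column j S) (axis j 1)) J) = 0"
    by (simp add: vec_eq_iff column_def column_select_def outer_prod_def)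
  with True show ?thesis
    by (simp add: det_zero_column)
next
  case False
  then have "column_select (S - outer_prod (column j S) (axis j 1)) J = column_select S J"
    by (auto simp: vec_eq_iff column_select_def outer_prod_def axis_def)
  with False show ?thesis
    by simp
qed

lemma column_select_shift_unselected:
  fixes S :: "'a::ring_1^'e^'m"
  assumes "j' \<notin> range J"
  shows "column_select (S - outer_prod (column js S) (axis j' 1)) J = column_select S J"
  using assms by (auto simp: vec_eq_iff column_select_def outer_prod_def axis_def)

lemma det_column_select_shift:
  fixes S :: "'a::comm_ring_1^'e^'m::finite"
  assumes "inj J" and "J m = j'"
  shows "det (column_select (S - outer_prod (column js S) (axis j' 1)) J)
       = det (column_select S J) - det (column_select S (J(m := js)))"
proof -
  let ?S' = "S - outer_prod (column js S) (axis j' 1)" and ?col = "\<lambda>k. column (J k) S"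
  have "J k = j' \<longleftrightarrow> k = m" for k
    using assms by (auto dest: injD)
  then have "transpose (column_select ?S' J)
      = (\<chi> k. if k = m then ?col k + (- 1) *s column js S else ?col k)"
    by (auto simp: vec_eq_iff transpose_def column_select_def outer_prod_def axis_def column_def)
  then have "det (column_select ?S' J)
      = det (\<chi> k. if k = m then ?col k + (- 1) *s column js S else ?col k)"
    by (metis det_transpose)
  also have "\<dots> = det (\<chi> k. if k = m then ?col k else ?col k)
      + det (\<chi> k. if k = m then (- 1) *s column js S else ?col k)"
    by (rule det_row_add)
  also have "det (\<chi> k. if k = m then (- 1) *s column js S else ?col k)
      = - det (\<chi> k. if k = m then column js S else ?col k)"
    by (simp add: det_row_mul)
  also have "(\<chi> k. if k = m then ?col k else ?col k) = transpose (column_select S J)"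
    by (simp add: vec_eq_iff transpose_def column_select_def column_def)
  also have "(\<chi> k. if k = m then column js S else ?col k) = transpose (column_select S (J(m := js)))"
    by (simp add: vec_eq_iff transpose_def column_select_def column_def)
  finally show ?thesis
    by simp
qed

lemma selects_basis_range_iff:
  fixes y ybar :: "'e::finite \<Rightarrow> 'm::finite \<Rightarrow> real"
  assumes "inj J"
  shows "selects_basis y ybar (range J) \<longleftrightarrow> det (column_select (stoich y ybar) J) \<noteq> 0"
proof
  assume "det (column_select (stoich y ybar) J) \<noteq> 0"
  moreover have "bij_betw J UNIV (range J)" and "card (range J) = CARD('m)"
    using assms by (simp_all add: bij_betw_def card_image)
  ultimately show "selects_basis y ybar (range J)"
    unfolding selects_basis_def column_select_def by blast
next
  assume "selects_basis y ybar (range J)"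
  then obtain g where g: "bij_betw g UNIV (range J)"
    and det_g: "det (column_select (stoich y ybar) g) \<noteq> 0"
    unfolding selects_basis_def column_select_def by blast
  define p where "p = inv J \<circ> g"
  have J_p: "J (p k) = g k" for k
    using g unfolding p_def bij_betw_def by (metis comp_apply f_inv_into_f rangeI)
  have "bij p"
    unfolding p_def using g assms
    by (metis bij_betw_def bij_betw_inv_into bij_betw_trans inj_on_imp_bij_betw)
  then have "p permutes UNIV"
    by (intro bij_imp_permutes) auto
  then have "det (column_select (stoich y ybar) g)
      = of_int (sign p) * det (column_select (stoich y ybar) J)"
    using det_permute_columns[of p "column_select (stoich y ybar) J"]
    by (simp add: column_select_def J_p)
  with det_g show "det (column_select (stoich y ybar) J) \<noteq> 0"
    by auto
qed

lemma influence_coeff_self_iff: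
  assumes "inj J"
  shows "influence_coeff y ybar js js J \<noteq> 0 \<longleftrightarrow> js \<notin> range J \<and> selects_basis y ybar (range J)"
  by (simp add: influence_coeff_def stoich_shift_def det_column_select_shift_self
      selects_basis_range_iff[OF assms])

lemma influence_coeff_swap_iff:
  assumes "inj J" and "j' \<noteq> js"
  shows "influence_coeff y ybar js j' J \<noteq> 0
     \<longleftrightarrow> js \<notin> range J \<and> j' \<in> range J \<and> selects_basis y ybar (insert js (range J - {j'}))"
proof (cases "j' \<in> range J")
  case False
  with assms(2) show ?thesis
    by (simp add: influence_coeff_def stoich_shift_def column_select_shift_unselected)
next
  case True
  then obtain m where m: "J m = j'"
    by auto
  have coeff: "influence_coeff y ybar js j' J = - det (column_select (stoich y ybar) (J(m := js)))"
    using assms(2)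
    by (simp add: influence_coeff_def stoich_shift_def det_column_select_shift[OF assms(1) m])
  show ?thesis
  proof (cases "js \<in> range J")
    case True
    then obtain m' where "J m' = js"
      by auto
    with m assms(2) have "\<not> inj (J(m := js))"
      unfolding inj_def by (metis fun_upd_other fun_upd_same)
    with True show ?thesis
      by (simp add: coeff det_column_select_not_inj)
  next
    case False
    have "range (J(m := js)) = insert js (range J - {j'})"
      using assms(1) m by (auto simp: image_iff inj_eq)
    moreover have "inj (J(m := js))"
      using assms(1) False by (simp add: inj_on_fun_updI)
    ultimately have "selects_basis y ybar (insert js (range J - {j'}))
        \<longleftrightarrow> det (column_select (stoich y ybar) (J(m := js))) \<noteq> 0"
      by (metis selects_basis_range_iff)
    with False \<open>j' \<in> range J\<close> show ?thesis
      by (simp add: coeff)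
  qed
qed

theorem theorem2p2:
  fixes y ybar :: "'e::finite \<Rightarrow> 'm::finite \<Rightarrow> real"
  assumes nonneg_in: "\<And>j m. y j m \<ge> 0"
    and nonneg_out: "\<And>j m. ybar j m \<ge> 0"
    and full_rank: "rank (stoich y ybar) = CARD('m)"
    and reg: "regular y ybar"
  shows "(influences y ybar (Inl jstar) (Inl jstar) \<longleftrightarrow>
            (\<exists>J. child_selection y J \<and> jstar \<notin> range J \<and> selects_basis y ybar (range J)))
       \<and> (\<forall>j'. j' \<noteq> jstar \<longrightarrow>
            (influences y ybar (Inl jstar) (Inl j') \<longleftrightarrow>
              (\<exists>J. child_selection y J \<and> jstar \<notin> range J \<and> j' \<in> range J \<and>
                   selects_basis y ybar (insert jstar (range J - {j'})))))"
proof (intro conjI allI impI)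
  have "(\<exists>J. child_selection y J \<and> influence_coeff y ybar jstar jstar J \<noteq> 0)
      \<longleftrightarrow> (\<exists>J. child_selection y J \<and> jstar \<notin> range J \<and> selects_basis y ybar (range J))"
    using influence_coeff_self_iff unfolding child_selection_def by blast
  then show "influences y ybar (Inl jstar) (Inl jstar) \<longleftrightarrow>
      (\<exists>J. child_selection y J \<and> jstar \<notin> range J \<and> selects_basis y ybar (range J))"
    by (simp add: influences_reaction_iff[OF reg])
next
  fix j'
  assume "j' \<noteq> jstar"
  then have "(\<exists>J. child_selection y J \<and> influence_coeff y ybar jstar j' J \<noteq> 0)
      \<longleftrightarrow> (\<exists>J. child_selection y J \<and> jstar \<notin> range J \<and> j' \<in> range J \<and>
           selects_basis y ybar (insert jstar (range J - {j'})))"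
    using influence_coeff_swap_iff unfolding child_selection_def by blast
  then show "influences y ybar (Inl jstar) (Inl j') \<longleftrightarrow>
      (\<exists>J. child_selection y J \<and> jstar \<notin> range J \<and> j' \<in> range J \<and>
           selects_basis y ybar (insert jstar (range J - {j'})))"
    by (simp add: influences_reaction_iff[OF reg])
qed

end
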